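(* Consider the problem $\min_{x\in\mathbb{R}^p} F(x):=f(x)+g(x)$, where: (i) $f:\mathbb{R}^p\to\mathbb{R}$ is $L$-smooth ($\|\nabla f(x)-\nabla f(y)\|\le L\|x-y\|$ for all $x,y$) and $g:\mathbb{R}^p\to\mathbb{R}\cup\{\infty\}$ is proper, lower semicontinuous and directionally differentiable; (ii) $F$ is bounded below; (iii) $g$ is prox-bounded, i.e. $g+\frac{\eta}{2}\|\cdot\|^2$ is bounded below for some $\eta>0$. Let $\{(x_t,\eta_t):t\ge0\}$ be generated by the following algorithm (GIST), run indefinitely: fix $\rho>1$, $0<\underline\eta<\overline\eta$, $\sigma\in(0,1)$ and an integer $r\ge1$, and start from $x_0\in\operatorname{dom}F$. At iteration $t$, choose $\hat\eta_t\in[\underline\eta,\overline\eta]$; for $l=0,1,2,\dots$ set $\eta_t=\rho^l\hat\eta_t$ and compute $x_{t+1}\in\operatorname{Prox}_{g/\eta_t}\big(x_t-\frac1{\eta_t}\nabla f(x_t)\big)$, stopping at the first $l$ for which $$F(x_{t+1})\le \max\{F(x_{t-r+1}),\dots,F(x_t)\}-\frac{\sigma\eta_t}{2}\|x_{t+1}-x_t\|^2$$ (where only indices $\ge 0$ are used in the maximum). If the generated sequence $\{x_t\}$ is bounded and $F$ is continuous on a compact set containing the sequence, then any accumulation point of $\{x_t\}$ is a d-stationary point of $F$.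
   Context: $\|\cdot\|$ is the Euclidean norm. $\operatorname{Prox}_{g/\eta}(y):=\operatorname{argmin}_{x\in\mathbb{R}^p}\{\tfrac1\eta g(x)+\tfrac12\|x-y\|^2\}$. The directional derivative is $F'(x;d):=\lim_{\tau\to+0}\frac{F(x+\tau d)-F(x)}{\tau}$ (possibly $+\infty$). A point $x^*$ is a d(irectional)-stationary point of $F$ if $F$ is directionally differentiable at $x^*$ (i.e. $F'(x^*;d)$ exists for all $d$) and $F'(x^*;d)\ge0$ for all $d\in\mathbb{R}^p$. *)

theory Defs
  imports "HOL-Analysis.Analysis"
begin

text \<open>Extended-real valued functions on a Euclidean space; \<infinity> encodes "outside the domain".\<close>

definition edom :: "('a \<Rightarrow> ereal) \<Rightarrow> 'a set" where
  "edom g = {x. g x < \<infinity>}"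

definition proper_fun :: "('a \<Rightarrow> ereal) \<Rightarrow> bool" where
  "proper_fun g \<longleftrightarrow> (\<forall>x. g x \<noteq> -\<infinity>) \<and> (\<exists>x. g x < \<infinity>)"

definition lsc_fun :: "('a::topological_space \<Rightarrow> ereal) \<Rightarrow> bool" where
  "lsc_fun g \<longleftrightarrow> (\<forall>c::ereal. closed {x. g x \<le> c})"

definition has_dir_deriv :: "('a::real_normed_vector \<Rightarrow> ereal) \<Rightarrow> 'a \<Rightarrow> 'a \<Rightarrow> ereal \<Rightarrow> bool" where
  "has_dir_deriv F x d D \<longleftrightarrow>
     ((\<lambda>\<tau>::real. (F (x + \<tau> *\<^sub>R d) - F x) / ereal \<tau>) \<longlongrightarrow> D) (at_right 0)"

definition dir_deriv :: "('a::real_normed_vector \<Rightarrow> ereal) \<Rightarrow> 'a \<Rightarrow> 'a \<Rightarrow> ereal" where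
  "dir_deriv F x d = Lim (at_right 0) (\<lambda>\<tau>::real. (F (x + \<tau> *\<^sub>R d) - F x) / ereal \<tau>)"

definition dir_differentiable_at :: "('a::real_normed_vector \<Rightarrow> ereal) \<Rightarrow> 'a \<Rightarrow> bool" where
  "dir_differentiable_at F x \<longleftrightarrow> \<bar>F x\<bar> < \<infinity> \<and> (\<forall>d. \<exists>D. has_dir_deriv F x d D)"

definition d_stationary :: "('a::real_normed_vector \<Rightarrow> ereal) \<Rightarrow> 'a \<Rightarrow> bool" where
  "d_stationary F x \<longleftrightarrow> dir_differentiable_at F x \<and> (\<forall>d. dir_deriv F x d \<ge> 0)"

definition prox :: "('a::real_normed_vector \<Rightarrow> ereal) \<Rightarrow> real \<Rightarrow> 'a \<Rightarrow> 'a set" where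
  "prox g \<eta> y = {x. \<forall>z. g x / ereal \<eta> + ereal (norm (x - y)^2 / 2)
                        \<le> g z / ereal \<eta> + ereal (norm (z - y)^2 / 2)}"

definition prox_bounded :: "('a::real_normed_vector \<Rightarrow> ereal) \<Rightarrow> bool" where
  "prox_bounded g \<longleftrightarrow> (\<exists>\<eta>>0. \<exists>c::real. \<forall>x. g x + ereal (\<eta> / 2 * norm x ^ 2) \<ge> ereal c)"

end

(* The acceptance test makes the window maxima max {F x_(t-r+1), ..., F x_t} nonincreasing, so
   F stays below F x_0 along the iterates, is finite and uniformly continuous on their compact
   closure, and the window maxima converge.  Uniform continuity then propagates the decrease
   through a window of r steps and forces ||x_(t+1) - x_t|| -> 0 (the argument of Grippo,
   Lampariello and Lucidi).  By the descent lemma every trial step size eta with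
   (1 - sigma) eta >= 2 L passes the test, so the accepted step sizes are bounded by some E.
   Passing to the limit in the prox optimality inequality along a subsequence converging to x*
   shows that x* minimises g u + <grad f x*, u - x*> + E/2 ||u - x*||^2; comparing with
   u = x* + tau d and letting tau -> 0+ gives F'(x*; d) >= 0. *)

theory Submission
  imports Defs
begin

section \<open>Nonmonotone descent\<close>

text \<open>Truncated subtraction makes the first windows \<open>{0..t}\<close> for \<open>t < r\<close>.\<close>
definition window_max :: "(nat \<Rightarrow> 'b::linorder) \<Rightarrow> nat \<Rightarrow> nat \<Rightarrow> 'b" where
  "window_max \<phi> r t = Max (\<phi> ` {Suc t - r..t})"

lemma window_max_ge:
  assumes "r \<ge> 1"
  shows "\<phi> t \<le> window_max \<phi> r t"
  unfolding window_max_def using assms by (intro Max_ge) auto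

lemma window_max_attained:
  assumes "r \<ge> 1"
  obtains s where "s \<in> {Suc t - r..t}" "\<phi> s = window_max \<phi> r t"
proof -
  have "window_max \<phi> r t \<in> \<phi> ` {Suc t - r..t}"
    unfolding window_max_def using assms by (intro Max_in) auto
  then show ?thesis using that by force
qed

lemma window_max_Suc_le:
  assumes r: "r \<ge> 1" and "\<phi> (Suc t) \<le> window_max \<phi> r t"
  shows "window_max \<phi> r (Suc t) \<le> window_max \<phi> r t"
proof -
  have "\<phi> j \<le> window_max \<phi> r t" if "j \<in> {Suc (Suc t) - r..Suc t}" for j
  proof (cases "j = Suc t")
    case False
    with that have "j \<in> {Suc t - r..t}" by auto
    then show ?thesis unfolding window_max_def by (intro Max_ge) auto
  qed (use assms in simp)
  then show ?thesis unfolding window_max_def[of \<phi> r "Suc t"] using r by (subst Max_le_iff) auto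
qed

lemma window_max_decseq:
  assumes "r \<ge> 1" and "\<And>t. \<phi> (Suc t) \<le> window_max \<phi> r t"
  shows "decseq (window_max \<phi> r)"
  using assms by (intro decseq_SucI window_max_Suc_le)

lemma le_window_max_initial:
  assumes r: "r \<ge> 1" and "\<And>t. \<phi> (Suc t) \<le> window_max \<phi> r t"
  shows "\<phi> t \<le> \<phi> 0"
proof -
  have "\<phi> t \<le> window_max \<phi> r t" using r by (rule window_max_ge)
  also have "\<dots> \<le> window_max \<phi> r 0" using window_max_decseq[OF assms] by (simp add: decseq_def)
  also have "\<dots> = \<phi> 0" using r by (simp add: window_max_def)
  finally show ?thesis .
qed

lemma window_max_mono_commute:
  assumes "mono h" and "r \<ge> 1"
  shows "window_max (\<lambda>t. h (\<phi> t)) r t = h (window_max \<phi> r t)"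
  unfolding window_max_def using assms mono_Max_commute[of h "\<phi> ` {Suc t - r..t}"]
  by (simp add: image_image)

lemma nonmonotone_descent_iterates_close:
  fixes \<psi> :: "'a::metric_space \<Rightarrow> real" and x :: "nat \<Rightarrow> 'a"
  assumes c: "c > 0"
    and dec: "\<And>t. \<psi> (x (Suc t)) \<le> window_max (\<lambda>t. \<psi> (x t)) r t - c * (dist (x (Suc t)) (x t))\<^sup>2"
    and lim: "window_max (\<lambda>t. \<psi> (x t)) r \<longlonglongrightarrow> m"
    and uc: "uniformly_continuous_on S \<psi>" and xS: "\<And>t. x t \<in> S"
    and e: "e > 0"
  shows "\<exists>T. \<forall>s\<ge>T. m \<le> \<psi> (x s) \<longrightarrow> (\<forall>j\<le>n. dist (x s) (x (s - j)) < e)"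
  using e
proof (induction n arbitrary: e)
  case (Suc n)
  define M where "M = window_max (\<lambda>t. \<psi> (x t)) r"
  define \<epsilon> where "\<epsilon> = c * e\<^sup>2 / 16"
  have \<epsilon>: "\<epsilon> > 0" using c Suc.prems unfolding \<epsilon>_def by simp
  obtain d where d: "d > 0" "\<forall>u\<in>S. \<forall>u'\<in>S. dist u' u < d \<longrightarrow> dist (\<psi> u') (\<psi> u) < \<epsilon>"
    using uc \<epsilon> unfolding uniformly_continuous_on_def by blast
  have "min d (e/2) > 0" using d Suc.prems by simp
  then obtain T0 where T0: "\<forall>s\<ge>T0. m \<le> \<psi> (x s) \<longrightarrow> (\<forall>j\<le>n. dist (x s) (x (s - j)) < min d (e/2))"
    using Suc.IH by blast
  obtain T1 where T1: "\<forall>t\<ge>T1. norm (M t - m) < \<epsilon>"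
    using LIMSEQ_D[OF lim \<epsilon>] unfolding M_def by blast
  have "dist (x s) (x (s - j)) < e" if s: "s \<ge> T0 + T1 + Suc n" and ms: "m \<le> \<psi> (x s)" and j: "j \<le> Suc n" for s j
  proof (cases "j \<le> n")
    case True
    then have "dist (x s) (x (s - j)) < e/2" using T0 ms s by simp
    then show ?thesis using Suc.prems by linarith
  next
    case False
    then have j: "j = Suc n" using j by simp
    define t where "t = s - Suc n"
    have st: "s - n = Suc t" using s unfolding t_def by simp
    have "T0 \<le> s" using s by simp
    then have near: "dist (x s) (x (Suc t)) < min d (e/2)" using T0 ms st by fastforce
    \<comment> \<open>\<open>\<psi> (x (Suc t))\<close> is within \<open>\<epsilon>\<close> of \<open>m\<close> and \<open>M t\<close> is too, so the descent term \<open>c D\<^sup>2\<close> is below \<open>2\<epsilon>\<close>.\<close>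
    define D where "D = dist (x (Suc t)) (x t)"
    have "T1 \<le> t" using s unfolding t_def by simp
    have "dist (\<psi> (x s)) (\<psi> (x (Suc t))) < \<epsilon>" using d(2) near xS by simp
    then have "m - \<epsilon> < \<psi> (x (Suc t))" using ms by (simp add: dist_real_def)
    moreover have "M t < m + \<epsilon>" using T1 \<open>T1 \<le> t\<close> by (auto simp: abs_less_iff)
    moreover have "\<psi> (x (Suc t)) \<le> M t - c * D\<^sup>2" using dec[of t] unfolding M_def D_def .
    ultimately have "c * D\<^sup>2 < c * e\<^sup>2 / 8" unfolding \<epsilon>_def by linarith
    also have "\<dots> < c * (e/2)\<^sup>2" using c Suc.prems by (simp add: power_divide)
    finally have "c * D\<^sup>2 < c * (e/2)\<^sup>2" .
    then have "D\<^sup>2 < (e/2)\<^sup>2" using c by simp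
    then have "D < e/2" by (rule power_less_imp_less_base) (use Suc.prems in simp)
    moreover have "dist (x s) (x t) \<le> dist (x s) (x (Suc t)) + D" unfolding D_def by (rule dist_triangle)
    ultimately show ?thesis using near j unfolding t_def by simp
  qed
  then show ?case by blast
qed simp

lemma nonmonotone_descent_steps_tendsto_zero:
  fixes \<psi> :: "'a::metric_space \<Rightarrow> real" and x :: "nat \<Rightarrow> 'a"
  assumes r: "r \<ge> 1" and c: "c > 0"
    and dec: "\<And>t. \<psi> (x (Suc t)) \<le> window_max (\<lambda>t. \<psi> (x t)) r t - c * (dist (x (Suc t)) (x t))\<^sup>2"
    and bdd: "\<And>t. b \<le> \<psi> (x t)"
    and uc: "uniformly_continuous_on S \<psi>" and xS: "\<And>t. x t \<in> S"
  shows "(\<lambda>t. dist (x (Suc t)) (x t)) \<longlonglongrightarrow> 0"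
proof -
  define M where "M = window_max (\<lambda>t. \<psi> (x t)) r"
  have "\<psi> (x (Suc t)) \<le> M t" for t
  proof -
    have "0 \<le> c * (dist (x (Suc t)) (x t))\<^sup>2" using c by simp
    then show ?thesis using dec[of t] unfolding M_def by linarith
  qed
  then have "decseq M" unfolding M_def using r by (intro window_max_decseq)
  moreover have "b \<le> M t" for t
    using bdd[of t] window_max_ge[OF r, of "\<lambda>t. \<psi> (x t)" t] unfolding M_def by linarith
  ultimately obtain m where lim: "M \<longlonglongrightarrow> m" and m_le: "\<And>t. m \<le> M t"
    using decseq_convergent by blast
  show ?thesis
  proof (rule metric_LIMSEQ_I)
    fix e :: real assume "e > 0"
    then obtain T where T: "\<forall>s\<ge>T. m \<le> \<psi> (x s) \<longrightarrow> (\<forall>j\<le>r. dist (x s) (x (s - j)) < e/2)"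
      using nonmonotone_descent_iterates_close[OF c dec lim[unfolded M_def] uc xS, of "e/2"] by auto
    have "dist (x (Suc t)) (x t) < e" if "t \<ge> T" for t
    proof -
      \<comment> \<open>The iterate attaining the window maximum at \<open>t + r\<close> lies within \<open>r\<close> steps after \<open>t\<close>.\<close>
      obtain s where s: "s \<in> {Suc t..t + r}" "\<psi> (x s) = M (t + r)"
        using window_max_attained[OF r, of "t + r" "\<lambda>t. \<psi> (x t)"] unfolding M_def by auto
      then have close: "\<forall>j\<le>r. dist (x s) (x (s - j)) < e/2" using T m_le \<open>t \<ge> T\<close> by auto
      have "dist (x s) (x t) < e/2" using close[rule_format, of "s - t"] s by auto
      moreover have "dist (x s) (x (Suc t)) < e/2" using close[rule_format, of "s - Suc t"] s by auto
      ultimately show ?thesis using dist_triangle3[of "x (Suc t)" "x t" "x s"] by linarith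
    qed
    then show "\<exists>T. \<forall>t\<ge>T. dist (dist (x (Suc t)) (x t)) 0 < e" by auto
  qed
qed

section \<open>Smoothness and the proximal gradient step\<close>

lemma lipschitz_constant_nonneg:
  fixes G :: "'a::euclidean_space \<Rightarrow> 'b::real_normed_vector"
  assumes "\<And>u v. norm (G u - G v) \<le> L * norm (u - v)"
  shows "L \<ge> 0"
proof -
  obtain b :: 'a where "b \<in> Basis" using nonempty_Basis by blast
  then have "0 \<le> L * norm (b - 0)" using assms[of b 0] norm_ge_zero order_trans by blast
  with \<open>b \<in> Basis\<close> show ?thesis by simp
qed

lemma has_real_derivative_along_line:
  assumes "(f has_derivative f') (at (y + s *\<^sub>R d))"
  shows "((\<lambda>\<tau>. f (y + \<tau> *\<^sub>R d)) has_real_derivative f' d) (at s)"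
proof -
  have "((\<lambda>\<tau>. y + \<tau> *\<^sub>R d) has_derivative (\<lambda>h. h *\<^sub>R d)) (at s)"
    by (auto intro!: derivative_eq_intros)
  from has_derivative_compose[OF this assms]
  have "((\<lambda>\<tau>. f (y + \<tau> *\<^sub>R d)) has_derivative (\<lambda>h. f' (h *\<^sub>R d))) (at s)" by (simp add: o_def)
  moreover have "(\<lambda>h. f' (h *\<^sub>R d)) = (\<lambda>h. f' d * h)"
    using linear_scale[OF has_derivative_linear[OF assms]] by (auto simp: mult.commute)
  ultimately show ?thesis unfolding has_field_derivative_def by simp
qed

text \<open>The constant \<open>L\<close> instead of the sharp \<open>L/2\<close> is what the mean value theorem gives directly, and suffices.\<close>
lemma descent_lemma:
  fixes f :: "'a::euclidean_space \<Rightarrow> real"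
  assumes grad: "\<And>u. (f has_derivative (\<lambda>h. gradf u \<bullet> h)) (at u)"
    and Lsmooth: "\<And>u v. norm (gradf u - gradf v) \<le> L * norm (u - v)"
  shows "f z \<le> f y + gradf y \<bullet> (z - y) + L * (norm (z - y))\<^sup>2"
proof -
  define d where "d = z - y"
  have "((\<lambda>\<tau>. f (y + \<tau> *\<^sub>R d)) has_real_derivative gradf (y + s *\<^sub>R d) \<bullet> d) (at s)" for s
    using has_real_derivative_along_line[OF grad] by simp
  then obtain \<xi> where \<xi>: "0 < \<xi>" "\<xi> < 1" and mvt: "f (y + d) - f y = gradf (y + \<xi> *\<^sub>R d) \<bullet> d"
    using MVT2[of 0 1 "\<lambda>\<tau>. f (y + \<tau> *\<^sub>R d)" "\<lambda>s. gradf (y + s *\<^sub>R d) \<bullet> d"] by auto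
  have "(gradf (y + \<xi> *\<^sub>R d) - gradf y) \<bullet> d \<le> norm (gradf (y + \<xi> *\<^sub>R d) - gradf y) * norm d"
    by (rule norm_cauchy_schwarz)
  also have "\<dots> \<le> L * norm (\<xi> *\<^sub>R d) * norm d"
    using Lsmooth[of "y + \<xi> *\<^sub>R d" y] by (intro mult_right_mono) auto
  also have "\<dots> = \<xi> * (L * (norm d)\<^sup>2)" using \<xi> by (simp add: power2_eq_square)
  also have "\<dots> \<le> L * (norm d)\<^sup>2"
    using \<xi> lipschitz_constant_nonneg[OF Lsmooth] by (intro mult_left_le_one_le) auto
  finally show ?thesis using mvt unfolding d_def by (simp add: inner_diff_left algebra_simps)
qed

lemma prox_grad_step_le:
  fixes g :: "'a::real_inner \<Rightarrow> ereal"
  assumes z: "z \<in> prox g \<eta> (y - (1/\<eta>) *\<^sub>R v)" and \<eta>: "\<eta> > 0"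
    and ninf: "\<And>w. g w \<noteq> -\<infinity>" and gu: "g u \<noteq> \<infinity>"
  shows "g z \<noteq> \<infinity>"
    and "real_of_ereal (g z) + v \<bullet> (z - y) + \<eta>/2 * (norm (z - y))\<^sup>2
           \<le> real_of_ereal (g u) + v \<bullet> (u - y) + \<eta>/2 * (norm (u - y))\<^sup>2"
proof -
  have opt: "g z / ereal \<eta> + ereal ((norm (z - (y - (1/\<eta>) *\<^sub>R v)))\<^sup>2 / 2)
        \<le> g u / ereal \<eta> + ereal ((norm (u - (y - (1/\<eta>) *\<^sub>R v)))\<^sup>2 / 2)"
    using z unfolding prox_def by blast
  obtain b where b: "g u = ereal b" using gu ninf[of u] by (cases "g u") auto
  show gz: "g z \<noteq> \<infinity>"
  proof
    assume "g z = \<infinity>"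
    then show False using opt b \<eta> by simp
  qed
  obtain a where a: "g z = ereal a" using gz ninf[of z] by (cases "g z") auto
  \<comment> \<open>Expanding the square turns the prox objective into \<open>1/\<eta>\<close> times the linearised model.\<close>
  have expand: "\<eta> * (c / \<eta> + (norm (w - (y - (1/\<eta>) *\<^sub>R v)))\<^sup>2 / 2)
      = c + v \<bullet> (w - y) + \<eta>/2 * (norm (w - y))\<^sup>2 + (norm v)\<^sup>2 / (2 * \<eta>)" for c w
    using \<eta> by (simp only: power2_norm_eq_inner)
      (simp add: inner_diff_left inner_diff_right inner_add_left inner_add_right inner_commute
        field_simps power2_eq_square)
  have "a / \<eta> + (norm (z - (y - (1/\<eta>) *\<^sub>R v)))\<^sup>2 / 2 \<le> b / \<eta> + (norm (u - (y - (1/\<eta>) *\<^sub>R v)))\<^sup>2 / 2"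
    using opt a b \<eta> by simp
  then have "\<eta> * (a / \<eta> + (norm (z - (y - (1/\<eta>) *\<^sub>R v)))\<^sup>2 / 2)
      \<le> \<eta> * (b / \<eta> + (norm (u - (y - (1/\<eta>) *\<^sub>R v)))\<^sup>2 / 2)"
    using \<eta> by (intro mult_left_mono) auto
  then show "real_of_ereal (g z) + v \<bullet> (z - y) + \<eta>/2 * (norm (z - y))\<^sup>2
      \<le> real_of_ereal (g u) + v \<bullet> (u - y) + \<eta>/2 * (norm (u - y))\<^sup>2"
    unfolding expand a b by simp
qed

lemma ereal_real_of_ereal_finite: "x \<noteq> \<infinity> \<Longrightarrow> x \<noteq> -\<infinity> \<Longrightarrow> ereal (real_of_ereal x) = x"
  by (cases x) auto

lemma prox_grad_sufficient_decrease:
  fixes f :: "'a::euclidean_space \<Rightarrow> real" and g :: "'a \<Rightarrow> ereal"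
  assumes grad: "\<And>u. (f has_derivative (\<lambda>h. gradf u \<bullet> h)) (at u)"
    and Lsmooth: "\<And>u v. norm (gradf u - gradf v) \<le> L * norm (u - v)"
    and ninf: "\<And>w. g w \<noteq> -\<infinity>" and gy: "g y \<noteq> \<infinity>"
    and z: "z \<in> prox g \<eta> (y - (1/\<eta>) *\<^sub>R gradf y)"
    and \<eta>: "\<eta> > 0" and large: "2 * L \<le> (1 - \<sigma>) * \<eta>"
  shows "ereal (f z) + g z \<le> ereal (f y) + g y - ereal (\<sigma> * \<eta> / 2 * (norm (z - y))\<^sup>2)"
proof -
  have gz: "g z \<noteq> \<infinity>"
    and opt: "real_of_ereal (g z) + gradf y \<bullet> (z - y) + \<eta>/2 * (norm (z - y))\<^sup>2 \<le> real_of_ereal (g y)"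
    using prox_grad_step_le[OF z \<eta> ninf gy] by simp_all
  have "f z \<le> f y + gradf y \<bullet> (z - y) + L * (norm (z - y))\<^sup>2"
    using grad Lsmooth by (rule descent_lemma)
  moreover have "L * (norm (z - y))\<^sup>2 \<le> (1 - \<sigma>) * \<eta> / 2 * (norm (z - y))\<^sup>2"
    using large by (intro mult_right_mono) auto
  ultimately have "f z + real_of_ereal (g z) \<le> f y + real_of_ereal (g y) - \<sigma> * \<eta> / 2 * (norm (z - y))\<^sup>2"
    using opt by (simp add: algebra_simps)
  moreover have "ereal (real_of_ereal (g z)) = g z" "ereal (real_of_ereal (g y)) = g y"
    using gz gy ninf by (simp_all add: ereal_real_of_ereal_finite)
  ultimately show ?thesis by (metis ereal_less_eq(3) ereal_minus(1) plus_ereal.simps(1))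
qed

section \<open>Directional derivatives\<close>

lemma dir_deriv_eqI: "has_dir_deriv F x d D \<Longrightarrow> dir_deriv F x d = D"
  unfolding dir_deriv_def has_dir_deriv_def
  by (rule tendsto_Lim) (simp_all add: trivial_limit_at_right_real)

lemma has_dir_deriv_add_differentiable:
  fixes f :: "'a::real_normed_vector \<Rightarrow> real" and g :: "'a \<Rightarrow> ereal"
  assumes f: "(f has_derivative f') (at x)" and g: "has_dir_deriv g x d D"
    and ninf: "\<And>u. g u \<noteq> -\<infinity>" and gx: "g x \<noteq> \<infinity>"
  shows "has_dir_deriv (\<lambda>u. ereal (f u) + g u) x d (ereal (f' d) + D)"
proof -
  obtain c where c: "g x = ereal c" using gx ninf[of x] by (cases "g x") auto
  have "((\<lambda>\<tau>. f (x + \<tau> *\<^sub>R d)) has_real_derivative f' d) (at 0 within {0<..})"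
    using has_real_derivative_along_line[of f f' x 0 d] f by (simp add: has_field_derivative_at_within)
  then have "((\<lambda>\<tau>. ereal ((f (x + \<tau> *\<^sub>R d) - f x) / \<tau>)) \<longlongrightarrow> ereal (f' d)) (at_right 0)"
    unfolding has_field_derivative_iff by (simp add: lim_ereal)
  then have "((\<lambda>\<tau>. ereal ((f (x + \<tau> *\<^sub>R d) - f x) / \<tau>) + (g (x + \<tau> *\<^sub>R d) - g x) / ereal \<tau>)
      \<longlongrightarrow> ereal (f' d) + D) (at_right 0)"
    using g unfolding has_dir_deriv_def by (intro tendsto_add_ereal_general2) simp_all
  moreover have "\<forall>\<^sub>F \<tau> in at_right 0.
      ereal ((f (x + \<tau> *\<^sub>R d) - f x) / \<tau>) + (g (x + \<tau> *\<^sub>R d) - g x) / ereal \<tau>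
      = (ereal (f (x + \<tau> *\<^sub>R d)) + g (x + \<tau> *\<^sub>R d) - (ereal (f x) + g x)) / ereal \<tau>"
    using eventually_at_right_less
  proof (rule eventually_mono)
    fix \<tau> :: real assume "0 < \<tau>"
    then show "ereal ((f (x + \<tau> *\<^sub>R d) - f x) / \<tau>) + (g (x + \<tau> *\<^sub>R d) - g x) / ereal \<tau>
        = (ereal (f (x + \<tau> *\<^sub>R d)) + g (x + \<tau> *\<^sub>R d) - (ereal (f x) + g x)) / ereal \<tau>"
      using c ninf[of "x + \<tau> *\<^sub>R d"]
      by (cases "g (x + \<tau> *\<^sub>R d)") (auto simp: diff_divide_distrib add_divide_distrib)
  qed
  ultimately show ?thesis unfolding has_dir_deriv_def by (simp add: tendsto_cong)
qed

lemma d_stationary_if_minimizes_prox_model: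
  fixes f :: "'a::real_inner \<Rightarrow> real" and g :: "'a \<Rightarrow> ereal"
  assumes f: "(f has_derivative (\<lambda>h. G \<bullet> h)) (at x)"
    and ninf: "\<And>u. g u \<noteq> -\<infinity>" and gx: "g x \<noteq> \<infinity>" and gdd: "dir_differentiable_at g x"
    and model: "\<And>u. g u \<noteq> \<infinity> \<Longrightarrow>
      real_of_ereal (g x) \<le> real_of_ereal (g u) + G \<bullet> (u - x) + E/2 * (norm (u - x))\<^sup>2"
  shows "d_stationary (\<lambda>u. ereal (f u) + g u) x"
proof -
  obtain c where c: "g x = ereal c" using gx ninf[of x] by (cases "g x") auto
  have g_dir_deriv_ge: "ereal (- (G \<bullet> d)) \<le> Dg" if Dg: "has_dir_deriv g x d Dg" for d Dg
  proof -
    have "\<forall>\<^sub>F \<tau> in at_right 0. ereal (- (G \<bullet> d) - E/2 * \<tau> * (norm d)\<^sup>2) \<le> (g (x + \<tau> *\<^sub>R d) - g x) / ereal \<tau>"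
      using eventually_at_right_less
    proof (rule eventually_mono)
      fix \<tau> :: real assume \<tau>: "0 < \<tau>"
      show "ereal (- (G \<bullet> d) - E/2 * \<tau> * (norm d)\<^sup>2) \<le> (g (x + \<tau> *\<^sub>R d) - g x) / ereal \<tau>"
      proof (cases "g (x + \<tau> *\<^sub>R d)")
        case (real a)
        then have "c \<le> a + \<tau> * (G \<bullet> d) + E/2 * \<tau>\<^sup>2 * (norm d)\<^sup>2"
          using model[of "x + \<tau> *\<^sub>R d"] c \<tau> by (simp add: power_mult_distrib)
        then have "- (G \<bullet> d) - E/2 * \<tau> * (norm d)\<^sup>2 \<le> (a - c) / \<tau>"
          using \<tau> by (simp add: field_simps power2_eq_square)
        then show ?thesis using real c \<tau> by simp
      qed (use c \<tau> ninf in simp_all)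
    qed
    moreover have "((\<lambda>\<tau>. ereal (- (G \<bullet> d) - E/2 * \<tau> * (norm d)\<^sup>2)) \<longlongrightarrow> ereal (- (G \<bullet> d))) (at_right 0)"
      unfolding lim_ereal by (auto intro!: tendsto_eq_intros)
    ultimately show ?thesis
      using Dg unfolding has_dir_deriv_def by (intro tendsto_le[OF trivial_limit_at_right_real])
  qed
  show ?thesis unfolding d_stationary_def dir_differentiable_at_def
  proof (intro conjI allI)
    show "\<bar>ereal (f x) + g x\<bar> < \<infinity>" using c by simp
    fix d
    obtain Dg where Dg: "has_dir_deriv g x d Dg" using gdd unfolding dir_differentiable_at_def by blast
    have F: "has_dir_deriv (\<lambda>u. ereal (f u) + g u) x d (ereal (G \<bullet> d) + Dg)"
      using has_dir_deriv_add_differentiable[OF f Dg ninf gx] by simp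
    then show "\<exists>D. has_dir_deriv (\<lambda>u. ereal (f u) + g u) x d D" by blast
    have "0 \<le> ereal (G \<bullet> d) + Dg" using g_dir_deriv_ge[OF Dg] by (cases Dg) auto
    then show "0 \<le> dir_deriv (\<lambda>u. ereal (f u) + g u) x d" using dir_deriv_eqI[OF F] by simp
  qed
qed

section \<open>The GIST iteration\<close>

locale gist_run =
  fixes f :: "'a::euclidean_space \<Rightarrow> real" and gradf :: "'a \<Rightarrow> 'a"
    and g F :: "'a \<Rightarrow> ereal"
    and L \<rho> \<eta>lo \<eta>hi \<sigma> :: real and r :: nat
    and x :: "nat \<Rightarrow> 'a" and \<eta> \<eta>hat :: "nat \<Rightarrow> real"
    and l :: "nat \<Rightarrow> nat" and z :: "nat \<Rightarrow> nat \<Rightarrow> 'a"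
  assumes F_def: "F = (\<lambda>u. ereal (f u) + g u)"
    and grad: "\<And>u. (f has_derivative (\<lambda>h. gradf u \<bullet> h)) (at u)"
    and Lsmooth: "\<And>u v. norm (gradf u - gradf v) \<le> L * norm (u - v)"
    and g_proper: "proper_fun g"
    and g_dd: "\<And>u. u \<in> edom g \<Longrightarrow> dir_differentiable_at g u"
    and F_bdd: "\<exists>c::real. \<forall>u. F u \<ge> ereal c"
    and \<rho>: "\<rho> > 1" and \<eta>lo: "0 < \<eta>lo"
    and \<sigma>: "0 < \<sigma>" "\<sigma> < 1" and r: "r \<ge> 1"
    and x0: "x 0 \<in> edom F"
    and \<eta>hat: "\<And>t. \<eta>hat t \<in> {\<eta>lo..\<eta>hi}"
    and \<eta>_def: "\<And>t. \<eta> t = \<rho> ^ l t * \<eta>hat t"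
    and trial: "\<And>t k. k \<le> l t \<Longrightarrow>
        z t k \<in> prox g (\<rho> ^ k * \<eta>hat t) (x t - (1 / (\<rho> ^ k * \<eta>hat t)) *\<^sub>R gradf (x t))"
    and reject: "\<And>t k. k < l t \<Longrightarrow>
        \<not> F (z t k) \<le> window_max (\<lambda>j. F (x j)) r t
                         - ereal (\<sigma> * (\<rho> ^ k * \<eta>hat t) / 2 * norm (z t k - x t) ^ 2)"
    and accept: "\<And>t. F (z t (l t)) \<le> window_max (\<lambda>j. F (x j)) r t
                         - ereal (\<sigma> * \<eta> t / 2 * norm (z t (l t) - x t) ^ 2)"
    and step: "\<And>t. x (Suc t) = z t (l t)"
    and cont: "\<exists>K. compact K \<and> range x \<subseteq> K \<and> continuous_on K F"
begin

lemma g_ninf: "g u \<noteq> -\<infinity>"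
  using g_proper unfolding proper_fun_def by blast

lemma trial_step_size_ge: "\<eta>lo \<le> \<rho> ^ k * \<eta>hat t"
proof -
  have "1 * \<eta>lo \<le> \<rho> ^ k * \<eta>hat t"
    using \<rho> \<eta>lo \<eta>hat[of t] by (intro mult_mono) auto
  then show ?thesis by simp
qed

lemma step_size_ge: "\<eta>lo \<le> \<eta> t"
  using trial_step_size_ge by (simp add: \<eta>_def)

lemma F_iterate_le_window_max: "F (x (Suc t)) \<le> window_max (\<lambda>j. F (x j)) r t"
proof -
  have "F (x (Suc t)) \<le> window_max (\<lambda>j. F (x j)) r t - ereal (\<sigma> * \<eta> t / 2 * norm (x (Suc t) - x t) ^ 2)"
    using accept[of t] step[of t] by simp
  also have "\<dots> \<le> window_max (\<lambda>j. F (x j)) r t"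
    using \<sigma> \<eta>lo step_size_ge[of t] by (intro ereal_diff_le_self) simp
  finally show ?thesis .
qed

lemma F_iterate_le_initial: "F (x t) \<le> F (x 0)"
  using r F_iterate_le_window_max by (rule le_window_max_initial)

lemma compact_closure_iterates: "compact (closure (range x))"
  and continuous_on_closure_iterates: "continuous_on (closure (range x)) F"
proof -
  obtain K where K: "compact K" "range x \<subseteq> K" "continuous_on K F" using cont by blast
  then show "compact (closure (range x))" by (metis bounded_subset compact_closure compact_imp_bounded)
  have "closure (range x) \<subseteq> K" using K by (intro closure_minimal) (auto intro: compact_imp_closed)
  then show "continuous_on (closure (range x)) F" using K(3) by (rule continuous_on_subset[rotated])
qed

lemma limit_point_in_closure: "(x \<circ> h) \<longlonglongrightarrow> xs \<Longrightarrow> xs \<in> closure (range x)"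
  unfolding closure_sequential by (intro exI[of _ "x \<circ> h"]) auto

lemma iterate_in_closure: "x t \<in> closure (range x)"
  using closure_subset[of "range x"] by auto

lemma F_closure_le_initial:
  assumes "u \<in> closure (range x)"
  shows "F u \<le> F (x 0)"
proof -
  have "closed (closure (range x) \<inter> F -` {..F (x 0)})"
    using continuous_on_closure_iterates by (intro continuous_closed_preimage) auto
  moreover have "range x \<subseteq> closure (range x) \<inter> F -` {..F (x 0)}"
    using iterate_in_closure F_iterate_le_initial by auto
  ultimately show ?thesis using assms closure_minimal by blast
qed

lemma F_closure_finite:
  assumes "u \<in> closure (range x)"
  shows "\<bar>F u\<bar> \<noteq> \<infinity>"
proof -
  have "F (x 0) < \<infinity>" using x0 unfolding edom_def by simp
  then have "F u < \<infinity>" using F_closure_le_initial[OF assms] by (metis order.strict_trans1)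
  moreover obtain c :: real where "ereal c \<le> F u" using F_bdd by blast
  ultimately show ?thesis by (cases "F u") auto
qed

lemma F_iterate_finite: "\<bar>F (x t)\<bar> \<noteq> \<infinity>"
  using iterate_in_closure by (rule F_closure_finite)

lemma g_closure_eq:
  assumes "u \<in> closure (range x)"
  shows "g u = ereal (real_of_ereal (F u) - f u)"
  using F_closure_finite[OF assms] g_ninf[of u] unfolding F_def by (cases "g u") auto

lemma real_F_continuous_on_closure: "continuous_on (closure (range x)) (\<lambda>u. real_of_ereal (F u))"
  using continuous_on_real continuous_on_closure_iterates
  by (rule continuous_on_compose2) (auto dest!: F_closure_finite)

lemma real_F_uniformly_continuous_on_closure:
  "uniformly_continuous_on (closure (range x)) (\<lambda>u. real_of_ereal (F u))"
  using real_F_continuous_on_closure compact_closure_iterates by (rule compact_uniformly_continuous)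

lemma real_F_sufficient_decrease:
  "real_of_ereal (F (x (Suc t)))
     \<le> window_max (\<lambda>j. real_of_ereal (F (x j))) r t - \<sigma> * \<eta>lo / 2 * (dist (x (Suc t)) (x t))\<^sup>2"
proof -
  have fin: "ereal (real_of_ereal (F (x j))) = F (x j)" for j using F_iterate_finite by (rule ereal_real')
  have "window_max (\<lambda>j. F (x j)) r t = ereal (window_max (\<lambda>j. real_of_ereal (F (x j))) r t)"
    using window_max_mono_commute[of ereal r "\<lambda>j. real_of_ereal (F (x j))" t] r by (simp add: fin mono_def)
  then have "F (x (Suc t))
      \<le> ereal (window_max (\<lambda>j. real_of_ereal (F (x j))) r t) - ereal (\<sigma> * \<eta> t / 2 * (norm (x (Suc t) - x t))\<^sup>2)"
    using accept[of t] step[of t] by simp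
  then have "real_of_ereal (F (x (Suc t)))
      \<le> window_max (\<lambda>j. real_of_ereal (F (x j))) r t - \<sigma> * \<eta> t / 2 * (norm (x (Suc t) - x t))\<^sup>2"
    by (subst (asm) fin[symmetric]) simp
  moreover have "\<sigma> * \<eta>lo / 2 * (norm (x (Suc t) - x t))\<^sup>2 \<le> \<sigma> * \<eta> t / 2 * (norm (x (Suc t) - x t))\<^sup>2"
    using step_size_ge[of t] \<sigma> by (intro mult_right_mono) auto
  ultimately show ?thesis by (simp add: dist_norm)
qed

lemma steps_tendsto_zero: "(\<lambda>t. dist (x (Suc t)) (x t)) \<longlonglongrightarrow> 0"
proof -
  obtain c :: real where "\<forall>u. ereal c \<le> F u" using F_bdd by blast
  then have "c \<le> real_of_ereal (F (x t))" for t
    using ereal_real'[OF F_iterate_finite[of t]] by (metis ereal_less_eq(3))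
  then show ?thesis
    using r real_F_sufficient_decrease real_F_uniformly_continuous_on_closure iterate_in_closure \<sigma> \<eta>lo
    by (intro nonmonotone_descent_steps_tendsto_zero[of r "\<sigma> * \<eta>lo / 2"]) auto
qed

lemma rejected_step_size_small:
  assumes "k < l t"
  shows "(1 - \<sigma>) * (\<rho> ^ k * \<eta>hat t) < 2 * L"
proof (rule ccontr)
  assume "\<not> ?thesis"
  moreover have "0 < \<rho> ^ k * \<eta>hat t" using trial_step_size_ge \<eta>lo by (metis less_le_trans)
  moreover have "g (x t) \<noteq> \<infinity>" using g_closure_eq[OF iterate_in_closure] by simp
  ultimately have "F (z t k) \<le> F (x t) - ereal (\<sigma> * (\<rho> ^ k * \<eta>hat t) / 2 * (norm (z t k - x t))\<^sup>2)"
    unfolding F_def using assms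
    by (intro prox_grad_sufficient_decrease[OF grad Lsmooth g_ninf _ trial]) auto
  also have "\<dots> \<le> window_max (\<lambda>j. F (x j)) r t - ereal (\<sigma> * (\<rho> ^ k * \<eta>hat t) / 2 * (norm (z t k - x t))\<^sup>2)"
    using r by (intro ereal_minus_mono window_max_ge) auto
  finally show False using reject[OF assms] by simp
qed

lemma step_size_le: "\<eta> t \<le> max \<eta>hi (\<rho> * (2 * L / (1 - \<sigma>)))"
proof (cases "l t")
  case 0
  then show ?thesis using \<eta>_def[of t] \<eta>hat[of t] by (simp add: le_max_iff_disj)
next
  case (Suc k)
  have "\<rho> ^ k * \<eta>hat t < 2 * L / (1 - \<sigma>)"
    using rejected_step_size_small[of k t] Suc \<sigma> by (simp add: pos_less_divide_eq mult.commute)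
  then have "\<rho> * (\<rho> ^ k * \<eta>hat t) \<le> \<rho> * (2 * L / (1 - \<sigma>))" using \<rho> by (intro mult_left_mono) auto
  moreover have "\<eta> t = \<rho> * (\<rho> ^ k * \<eta>hat t)" using Suc \<eta>_def[of t] by simp
  ultimately show ?thesis by (simp add: le_max_iff_disj)
qed

lemma isCont_gradf: "isCont gradf u"
proof -
  have "L-lipschitz_on UNIV gradf"
    unfolding lipschitz_on_def using lipschitz_constant_nonneg[OF Lsmooth] Lsmooth by (simp add: dist_norm)
  then show ?thesis using lipschitz_on_continuous_on continuous_on_eq_continuous_at by blast
qed

lemma prox_model_step_le:
  assumes E: "\<eta> t \<le> E" and gu: "g u \<noteq> \<infinity>"
  shows "real_of_ereal (g (x (Suc t))) + gradf (x t) \<bullet> (x (Suc t) - x t)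
      \<le> real_of_ereal (g u) + gradf (x t) \<bullet> (u - x t) + E/2 * (norm (u - x t))\<^sup>2"
proof -
  have \<eta>: "\<eta> t > 0" using step_size_ge \<eta>lo by (metis less_le_trans)
  have "x (Suc t) \<in> prox g (\<eta> t) (x t - (1 / \<eta> t) *\<^sub>R gradf (x t))"
    using trial[of "l t" t] step \<eta>_def by simp
  from prox_grad_step_le(2)[OF this \<eta> g_ninf gu]
  have "real_of_ereal (g (x (Suc t))) + gradf (x t) \<bullet> (x (Suc t) - x t) + \<eta> t/2 * (norm (x (Suc t) - x t))\<^sup>2
      \<le> real_of_ereal (g u) + gradf (x t) \<bullet> (u - x t) + \<eta> t/2 * (norm (u - x t))\<^sup>2" .
  moreover have "\<eta> t/2 * (norm (u - x t))\<^sup>2 \<le> E/2 * (norm (u - x t))\<^sup>2"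
    using E by (intro mult_right_mono) auto
  moreover have "0 \<le> \<eta> t/2 * (norm (x (Suc t) - x t))\<^sup>2" using \<eta> by simp
  ultimately show ?thesis by linarith
qed

lemma limit_point_successors:
  assumes "strict_mono h" "(x \<circ> h) \<longlonglongrightarrow> xs"
  shows "(\<lambda>k. x (Suc (h k))) \<longlonglongrightarrow> xs"
proof -
  have "(\<lambda>k. x (Suc (h k)) - x (h k)) \<longlonglongrightarrow> 0"
    using LIMSEQ_subseq_LIMSEQ[OF steps_tendsto_zero assms(1)]
    by (simp add: o_def dist_norm tendsto_norm_zero_iff)
  from tendsto_add[OF assms(2)[unfolded o_def] this] show ?thesis by simp
qed

lemma limit_point_minimizes_prox_model:
  assumes h: "strict_mono h" "(x \<circ> h) \<longlonglongrightarrow> xs" and E: "\<And>t. \<eta> t \<le> E" and gu: "g u \<noteq> \<infinity>"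
  shows "real_of_ereal (g xs) \<le> real_of_ereal (g u) + gradf xs \<bullet> (u - xs) + E/2 * (norm (u - xs))\<^sup>2"
proof -
  \<comment> \<open>On the closure of the iterates \<open>g\<close> is finite and equals \<open>F - f\<close>, which is continuous there.\<close>
  let ?g = "\<lambda>v. real_of_ereal (F v) - f v"
  have xs: "xs \<in> closure (range x)" using h(2) by (rule limit_point_in_closure)
  have xh: "(\<lambda>k. x (h k)) \<longlonglongrightarrow> xs" using h(2) by (simp add: o_def)
  note xh1 = limit_point_successors[OF h]
  have f_cont: "isCont f v" for v using grad by (rule has_derivative_continuous)
  have "(\<lambda>k. ?g (x (Suc (h k))) + gradf (x (h k)) \<bullet> (x (Suc (h k)) - x (h k)))
      \<longlonglongrightarrow> ?g xs + gradf xs \<bullet> (xs - xs)"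
    by (intro tendsto_intros continuous_on_tendsto_compose[OF real_F_continuous_on_closure xh1 xs]
        isCont_tendsto_compose[OF f_cont xh1] isCont_tendsto_compose[OF isCont_gradf xh] xh1 xh)
      (simp_all add: iterate_in_closure)
  moreover have "(\<lambda>k. real_of_ereal (g u) + gradf (x (h k)) \<bullet> (u - x (h k)) + E/2 * (norm (u - x (h k)))\<^sup>2)
      \<longlonglongrightarrow> real_of_ereal (g u) + gradf xs \<bullet> (u - xs) + E/2 * (norm (u - xs))\<^sup>2"
    by (intro tendsto_intros isCont_tendsto_compose[OF isCont_gradf xh] xh)
  moreover have "?g (x (Suc t)) + gradf (x t) \<bullet> (x (Suc t) - x t)
      \<le> real_of_ereal (g u) + gradf (x t) \<bullet> (u - x t) + E/2 * (norm (u - x t))\<^sup>2" for t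
    using prox_model_step_le[OF E gu] g_closure_eq[OF iterate_in_closure] by simp
  ultimately have "?g xs \<le> real_of_ereal (g u) + gradf xs \<bullet> (u - xs) + E/2 * (norm (u - xs))\<^sup>2"
    by (intro LIMSEQ_le) auto
  then show ?thesis using g_closure_eq[OF xs] by simp
qed

lemma limit_point_d_stationary:
  assumes "strict_mono h" "(x \<circ> h) \<longlonglongrightarrow> xs"
  shows "d_stationary F xs"
proof -
  have gxs: "g xs \<noteq> \<infinity>" using g_closure_eq[OF limit_point_in_closure[OF assms(2)]] by simp
  moreover have "dir_differentiable_at g xs" using g_dd gxs unfolding edom_def by simp
  moreover note limit_point_minimizes_prox_model[OF assms step_size_le]
  ultimately show ?thesis unfolding F_def by (rule d_stationary_if_minimizes_prox_model[OF grad g_ninf])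
qed

end

theorem theorem1:
  fixes f :: "'a::euclidean_space \<Rightarrow> real"
    and gradf :: "'a \<Rightarrow> 'a"
    and g :: "'a \<Rightarrow> ereal"
    and L \<rho> \<eta>lo \<eta>hi \<sigma> :: real
    and r :: nat
    and x :: "nat \<Rightarrow> 'a"
    and \<eta> \<eta>hat :: "nat \<Rightarrow> real"
    and l :: "nat \<Rightarrow> nat"
    and z :: "nat \<Rightarrow> nat \<Rightarrow> 'a"
    and xs :: 'a
  defines "F \<equiv> (\<lambda>u. ereal (f u) + g u)"
  assumes grad: "\<And>u. (f has_derivative (\<lambda>h. gradf u \<bullet> h)) (at u)"
    and Lsmooth: "\<And>u v. norm (gradf u - gradf v) \<le> L * norm (u - v)"
    and g_proper: "proper_fun g"
    and g_lsc: "lsc_fun g"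
    and g_dd: "\<And>u. u \<in> edom g \<Longrightarrow> dir_differentiable_at g u"
    and F_bdd: "\<exists>c::real. \<forall>u. F u \<ge> ereal c"
    and g_pb: "prox_bounded g"
    and \<rho>: "\<rho> > 1" and \<eta>bounds: "0 < \<eta>lo" "\<eta>lo < \<eta>hi"
    and \<sigma>: "0 < \<sigma>" "\<sigma> < 1" and r: "r \<ge> 1"
    and x0: "x 0 \<in> edom F"
    and \<eta>hat: "\<And>t. \<eta>hat t \<in> {\<eta>lo..\<eta>hi}"
    and \<eta>_def: "\<And>t. \<eta> t = \<rho> ^ l t * \<eta>hat t"
    and trial: "\<And>t k. k \<le> l t \<Longrightarrow>
        z t k \<in> prox g (\<rho> ^ k * \<eta>hat t) (x t - (1 / (\<rho> ^ k * \<eta>hat t)) *\<^sub>R gradf (x t))"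
    and reject: "\<And>t k. k < l t \<Longrightarrow>
        \<not> (F (z t k) \<le> Max ((\<lambda>j. F (x j)) ` {Suc t - r..t})
                        - ereal (\<sigma> * (\<rho> ^ k * \<eta>hat t) / 2 * norm (z t k - x t) ^ 2))"
    and accept: "\<And>t. F (z t (l t)) \<le> Max ((\<lambda>j. F (x j)) ` {Suc t - r..t})
                        - ereal (\<sigma> * \<eta> t / 2 * norm (z t (l t) - x t) ^ 2)"
    and step: "\<And>t. x (Suc t) = z t (l t)"
    and bdd: "bounded (range x)"
    and cont: "\<exists>K. compact K \<and> range x \<subseteq> K \<and> continuous_on K F"
    and acc: "\<exists>h. strict_mono h \<and> (x \<circ> h) \<longlonglongrightarrow> xs"
  shows "d_stationary F xs"
proof -
  \<comment> \<open>Lower semicontinuity and prox-boundedness of \<open>g\<close> only guarantee that the prox points exist,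
    and boundedness of the iterates already follows from \<open>cont\<close>; none of them is needed here.\<close>
  interpret gist_run f gradf g F L \<rho> \<eta>lo \<eta>hi \<sigma> r x \<eta> \<eta>hat l z
    using grad Lsmooth g_proper g_dd F_bdd \<rho> \<eta>bounds \<sigma> r x0 \<eta>hat \<eta>_def trial reject accept step cont
    by unfold_locales (simp_all add: F_def window_max_def)
  from acc obtain h where "strict_mono h" "(x \<circ> h) \<longlonglongrightarrow> xs" by blast
  then show ?thesis by (rule limit_point_d_stationary)
qed

end
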